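(* Let $G$ be a graph and $n\ge 0$ an integer. Then $\operatorname{col}_{ve}(G)\ge n+4$ if and only if, in the vertex-edge marking game on $G$, Bob has a strategy guaranteeing that, at the start of one of his turns, there is an $n$-free path.
   Context: The vertex-edge marking game on a graph $G=(V,E)$ (finite or infinite) is played by Alice, who marks vertices, and Bob, who marks edges. Initially nothing is marked. The game proceeds in rounds $r=1,2,\dots$; in each round Alice first marks one unmarked vertex, then Bob marks one unmarked edge. For a finite graph the game ends when either player has no move; for an infinite graph it continues forever. After round $r$, the vertex score of $v$ is $0$ if $v$ is marked, and otherwise the number of marked edges incident to $v$. The $r$-round score is the supremum over $v\in V$ of the vertex scores after round $r$, and the final score of the game is the supremum of the $r$-round scores over all rounds. Bob has a winning strategy for score $s$ if, whatever Alice plays, Bob can force the final score to be at least $s$. The vertex-edge coloring number is $\operatorname{col}_{ve}(G)=\sup\{s : \text{Bob has a winning strategy for score } s\}+1$. In a position of the game, an $n$-free path is a path $P$ in $G$ with vertex sequence $v_0,\dots,v_k$, $k\ge 2$, such that: the first and last edges $v_0v_1$ and $v_{k-1}v_k$ are marked; the interior vertices $v_1,\dots,v_{k-1}$ are unmarked; and each interior vertex is incident to at least $n+1$ edges not in $P$, at least $n$ of which are marked. *)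

theory Defs
  imports Main "HOL-Library.Extended_Nat"
begin

definition graph :: "'a set \<Rightarrow> 'a set set \<Rightarrow> bool" where
  "graph V E \<longleftrightarrow> (\<forall>e\<in>E. \<exists>u v. u \<in> V \<and> v \<in> V \<and> u \<noteq> v \<and> e = {u, v})"

text \<open>Bob's (deterministic) strategy: given the list of completed rounds
  (Alice's vertex, Bob's edge) and Alice's current vertex, return an edge.
  Alice's moves are given as a sequence a (a i is her move in round i+1).\<close>
type_synonym 'a bob_strat = "('a \<times> 'a set) list \<Rightarrow> 'a \<Rightarrow> 'a set"

fun hist :: "'a bob_strat \<Rightarrow> (nat \<Rightarrow> 'a) \<Rightarrow> nat \<Rightarrow> ('a \<times> 'a set) list" where
  "hist \<sigma> a 0 = []"
| "hist \<sigma> a (Suc i) = hist \<sigma> a i @ [(a i, \<sigma> (hist \<sigma> a i) (a i))]"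

definition bmove :: "'a bob_strat \<Rightarrow> (nat \<Rightarrow> 'a) \<Rightarrow> nat \<Rightarrow> 'a set" where
  "bmove \<sigma> a i = \<sigma> (hist \<sigma> a i) (a i)"

definition mV :: "(nat \<Rightarrow> 'a) \<Rightarrow> nat \<Rightarrow> 'a set" where
  "mV a i = a ` {..<i}"

definition mE :: "'a bob_strat \<Rightarrow> (nat \<Rightarrow> 'a) \<Rightarrow> nat \<Rightarrow> 'a set set" where
  "mE \<sigma> a i = bmove \<sigma> a ` {..<i}"

text \<open>Rounds 1..i have all been played legally (the game has not ended before).\<close>
definition completed :: "'a set \<Rightarrow> 'a set set \<Rightarrow> 'a bob_strat \<Rightarrow> (nat \<Rightarrow> 'a) \<Rightarrow> nat \<Rightarrow> bool" where
  "completed V E \<sigma> a i \<longleftrightarrow>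
     (\<forall>j<i. a j \<in> V - mV a j \<and> bmove \<sigma> a j \<in> E - mE \<sigma> a j)"

definition alice_legal :: "'a set \<Rightarrow> 'a set set \<Rightarrow> 'a bob_strat \<Rightarrow> (nat \<Rightarrow> 'a) \<Rightarrow> bool" where
  "alice_legal V E \<sigma> a \<longleftrightarrow>
     (\<forall>i. completed V E \<sigma> a i \<and> V - mV a i \<noteq> {} \<longrightarrow> a i \<in> V - mV a i)"

definition bob_strategy :: "'a set \<Rightarrow> 'a set set \<Rightarrow> 'a bob_strat \<Rightarrow> bool" where
  "bob_strategy V E \<sigma> \<longleftrightarrow>
     (\<forall>a i. completed V E \<sigma> a i \<and> a i \<in> V - mV a i \<and> E - mE \<sigma> a i \<noteq> {}
        \<longrightarrow> bmove \<sigma> a i \<in> E - mE \<sigma> a i)"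

definition vertex_score :: "'a set \<Rightarrow> 'a set set \<Rightarrow> 'a \<Rightarrow> nat" where
  "vertex_score MV ME v = (if v \<in> MV then 0 else card {e \<in> ME. v \<in> e})"

definition round_score :: "'a set \<Rightarrow> 'a set \<Rightarrow> 'a set set \<Rightarrow> enat" where
  "round_score V MV ME = Sup ((\<lambda>v. enat (vertex_score MV ME v)) ` V)"

definition final_score :: "'a set \<Rightarrow> 'a set set \<Rightarrow> 'a bob_strat \<Rightarrow> (nat \<Rightarrow> 'a) \<Rightarrow> enat" where
  "final_score V E \<sigma> a =
     Sup {round_score V (mV a i) (mE \<sigma> a i) | i. 1 \<le> i \<and> completed V E \<sigma> a i}"

definition bob_wins :: "'a set \<Rightarrow> 'a set set \<Rightarrow> nat \<Rightarrow> bool" where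
  "bob_wins V E s \<longleftrightarrow>
     (\<exists>\<sigma>. bob_strategy V E \<sigma> \<and> (\<forall>a. alice_legal V E \<sigma> a \<longrightarrow> enat s \<le> final_score V E \<sigma> a))"

definition col_ve :: "'a set \<Rightarrow> 'a set set \<Rightarrow> enat" where
  "col_ve V E = Sup {enat s | s. bob_wins V E s} + 1"

definition at_least :: "nat \<Rightarrow> 'b set \<Rightarrow> bool" where
  "at_least k A \<longleftrightarrow> infinite A \<or> k \<le> card A"

definition path_edges :: "'a list \<Rightarrow> 'a set set" where
  "path_edges vs = {{vs ! i, vs ! Suc i} | i. Suc i < length vs}"

definition n_free_path :: "'a set \<Rightarrow> 'a set set \<Rightarrow> 'a set \<Rightarrow> 'a set set \<Rightarrow> nat \<Rightarrow> 'a list \<Rightarrow> bool" where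
  "n_free_path V E MV ME n vs \<longleftrightarrow>
     (let k = length vs - 1 in
       3 \<le> length vs \<and> distinct vs \<and> set vs \<subseteq> V \<and>
       (\<forall>i<k. {vs ! i, vs ! Suc i} \<in> E) \<and>
       {vs ! 0, vs ! 1} \<in> ME \<and> {vs ! (k - 1), vs ! k} \<in> ME \<and>
       (\<forall>i. 0 < i \<and> i < k \<longrightarrow>
          vs ! i \<notin> MV \<and>
          at_least (n + 1) ({e \<in> E. vs ! i \<in> e} - path_edges vs) \<and>
          at_least n (({e \<in> E. vs ! i \<in> e} - path_edges vs) \<inter> ME)))"

text \<open>At the start of Bob's turn in round i+1 (rounds 1..i completed, Alice has just
  marked a i legally, and Bob has a move) there is an n-free path.\<close>
definition free_path_at_bob_turn ::
  "'a set \<Rightarrow> 'a set set \<Rightarrow> 'a bob_strat \<Rightarrow> (nat \<Rightarrow> 'a) \<Rightarrow> nat \<Rightarrow> nat \<Rightarrow> bool" where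
  "free_path_at_bob_turn V E \<sigma> a n i \<longleftrightarrow>
     completed V E \<sigma> a i \<and> a i \<in> V - mV a i \<and> E - mE \<sigma> a i \<noteq> {} \<and>
     (\<exists>vs. n_free_path V E (insert (a i) (mV a i)) (mE \<sigma> a i) n vs)"

end

theory Submission
  imports Defs
begin

(* If Bob can force score n + 3, look at the round in which some unmarked vertex v receives its
   (n+3)-rd marked edge. At the start of Bob's turn v has n + 2 marked edges; two of them, with
   their other ends u and w, form an n-free path u v w, the edge Bob is about to mark being the
   (n+1)-st edge at v outside the path.
   Conversely, Bob follows a strategy that forces an n-free path until one appears, and from then
   on plays on a shortest n-free path v_0 ... v_k. If k >= 3 he marks v_1 v_2; whichever vertex
   Alice marks next, v_1 ... v_k or v_0 v_1 v_2 is a strictly shorter n-free path. If k = 2, the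
   middle vertex has n + 2 marked edges and at least n + 3 edges in all, so either Bob marks a
   further edge at it or all its edges are marked already; either way its score reaches n + 3. *)

section \<open>Plays\<close>

lemma hist_conv_map: "hist \<sigma> a i = map (\<lambda>j. (a j, bmove \<sigma> a j)) [0..<i]"
  by (induction i) (auto simp: bmove_def)

lemma fst_set_hist: "fst ` set (hist \<sigma> a i) = mV a i"
  by (simp add: hist_conv_map mV_def image_image atLeast0LessThan)

lemma snd_set_hist: "snd ` set (hist \<sigma> a i) = mE \<sigma> a i"
  by (simp add: hist_conv_map mE_def image_image atLeast0LessThan)

lemma mV_Suc: "mV a (Suc i) = insert (a i) (mV a i)"
  by (simp add: mV_def lessThan_Suc)

lemma mV_mono: "i \<le> j \<Longrightarrow> mV a i \<subseteq> mV a j"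
  unfolding mV_def by auto

lemma mE_0 [simp]: "mE \<sigma> a 0 = {}"
  by (simp add: mE_def)

lemma mE_Suc: "mE \<sigma> a (Suc i) = insert (bmove \<sigma> a i) (mE \<sigma> a i)"
  by (simp add: mE_def lessThan_Suc)

lemma finite_mE [simp]: "finite (mE \<sigma> a i)"
  by (simp add: mE_def)

lemma completed_Suc: "completed V E \<sigma> a (Suc i) \<longleftrightarrow>
   completed V E \<sigma> a i \<and> a i \<in> V - mV a i \<and> bmove \<sigma> a i \<in> E - mE \<sigma> a i"
  unfolding completed_def by (auto simp: less_Suc_eq)

lemma completed_le: "completed V E \<sigma> a i \<Longrightarrow> j \<le> i \<Longrightarrow> completed V E \<sigma> a j"
  unfolding completed_def by auto

lemma mE_subset_E: "completed V E \<sigma> a i \<Longrightarrow> mE \<sigma> a i \<subseteq> E"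
  unfolding completed_def mE_def by auto

lemma bmove_eq_if_hist_eq: "hist \<sigma> a i = hist \<tau> a i \<Longrightarrow> j < i \<Longrightarrow> bmove \<sigma> a j = bmove \<tau> a j"
  by (simp add: hist_conv_map)

lemma mE_eq_if_hist_eq:
  assumes "hist \<sigma> a i = hist \<tau> a i"
  shows "mE \<sigma> a i = mE \<tau> a i"
proof -
  have "bmove \<sigma> a j = bmove \<tau> a j" if "j < i" for j
    using assms that by (rule bmove_eq_if_hist_eq)
  then show ?thesis unfolding mE_def by (intro image_cong) auto
qed

lemma completed_eq_if_hist_eq:
  assumes "hist \<sigma> a i = hist \<tau> a i"
  shows "completed V E \<sigma> a i \<longleftrightarrow> completed V E \<tau> a i"
proof -
  have "bmove \<sigma> a j = bmove \<tau> a j \<and> mE \<sigma> a j = mE \<tau> a j" if "j < i" for j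
  proof
    show "bmove \<sigma> a j = bmove \<tau> a j" using assms that by (rule bmove_eq_if_hist_eq)
    have "hist \<sigma> a j = hist \<tau> a j" using assms that by (simp add: hist_conv_map)
    then show "mE \<sigma> a j = mE \<tau> a j" by (rule mE_eq_if_hist_eq)
  qed
  then show ?thesis unfolding completed_def by auto
qed

lemma ex_crossing_step:
  assumes "P r" "\<not> P 0"
  shows "\<exists>i<r. \<not> P i \<and> P (Suc i)"
  using assms by (induction r) (auto simp: less_Suc_eq)

section \<open>Scores and the vertex-edge coloring number\<close>

lemma final_score_ge_iff:
  assumes "0 < s"
  shows "enat s \<le> final_score V E \<sigma> a \<longleftrightarrow>
    (\<exists>r v. completed V E \<sigma> a r \<and> v \<in> V \<and> v \<notin> mV a r \<and> s \<le> card {e \<in> mE \<sigma> a r. v \<in> e})"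
proof -
  obtain k where s: "s = Suc k" using assms not0_implies_Suc by blast
  have r_pos: "1 \<le> r" if "s \<le> card {e \<in> mE \<sigma> a r. v \<in> e}" for r v
    using that assms by (cases r) auto
  have "enat s \<le> final_score V E \<sigma> a \<longleftrightarrow>
      (\<exists>r. 1 \<le> r \<and> completed V E \<sigma> a r \<and> enat k < round_score V (mV a r) (mE \<sigma> a r))"
    unfolding s Suc_ile_eq final_score_def less_Sup_iff by blast
  also have "\<dots> \<longleftrightarrow>
      (\<exists>r v. completed V E \<sigma> a r \<and> v \<in> V \<and> v \<notin> mV a r \<and> s \<le> card {e \<in> mE \<sigma> a r. v \<in> e})"
    unfolding s round_score_def less_SUP_iff vertex_score_def
    using r_pos[unfolded s] by (fastforce split: if_splits)
  finally show ?thesis .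
qed

lemma bob_wins_mono: "bob_wins V E t \<Longrightarrow> s \<le> t \<Longrightarrow> bob_wins V E s"
  unfolding bob_wins_def by (meson enat_ord_simps(1) order_trans)

lemma col_ve_ge_iff_bob_wins:
  assumes "0 < s"
  shows "enat (Suc s) \<le> col_ve V E \<longleftrightarrow> bob_wins V E s"
proof -
  let ?S = "{enat t | t. bob_wins V E t}"
  obtain k where s: "s = Suc k" using assms not0_implies_Suc by blast
  have "enat (Suc s) \<le> col_ve V E \<longleftrightarrow> enat s \<le> Sup ?S"
    unfolding col_ve_def eSuc_plus_1[symmetric] eSuc_enat[symmetric] by simp
  also have "\<dots> \<longleftrightarrow> bob_wins V E s"
    unfolding s Suc_ile_eq less_Sup_iff using bob_wins_mono[of V E _ "Suc k"] by auto
  finally show ?thesis .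
qed

section \<open>Free paths\<close>

lemma at_least_mono: "A \<subseteq> B \<Longrightarrow> at_least k A \<Longrightarrow> at_least k B"
  unfolding at_least_def by (meson card_mono order_trans finite_subset)

lemma path_edges_take_subset: "path_edges (take m vs) \<subseteq> path_edges vs"
  unfolding path_edges_def by force

lemma path_edges_drop_subset: "path_edges (drop k vs) \<subseteq> path_edges vs"
proof
  fix e assume "e \<in> path_edges (drop k vs)"
  then obtain i where "e = {vs ! (k + i), vs ! Suc (k + i)}" "Suc (k + i) < length vs"
    unfolding path_edges_def by auto
  then show "e \<in> path_edges vs" unfolding path_edges_def by blast
qed

lemma path_edges_3: "path_edges [x, y, z] = {{x, y}, {y, z}}"
  unfolding path_edges_def by (auto simp: less_Suc_eq) (metis nth_Cons_0 nth_Cons_Suc)+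

lemma n_free_path_interior:
  assumes "n_free_path V E MV ME n vs" "0 < j" "j < length vs - 1"
  shows "vs ! j \<in> V" "vs ! j \<notin> MV"
  using assms nth_mem[of j vs] unfolding n_free_path_def Let_def by auto

lemma n_free_path_subpath:
  assumes vs: "n_free_path V E MV ME n vs"
    and len: "3 \<le> m" "k + m \<le> length vs"
    and ME': "ME \<subseteq> ME'" "{vs ! k, vs ! (k + 1)} \<in> ME'"
      "{vs ! (k + m - 2), vs ! (k + m - 1)} \<in> ME'"
    and MV': "\<And>j. k < j \<Longrightarrow> j < k + m - 1 \<Longrightarrow> vs ! j \<notin> MV'"
  shows "n_free_path V E MV' ME' n (take m (drop k vs))"
proof -
  let ?ws = "take m (drop k vs)"
  have ws_len: "length ?ws = m" using len by simp
  have ws_nth: "?ws ! j = vs ! (k + j)" if "j < m" for j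
    using that len by simp
  have incident: "{e \<in> E. x \<in> e} - path_edges vs \<subseteq> {e \<in> E. x \<in> e} - path_edges ?ws" for x
    using path_edges_take_subset path_edges_drop_subset by blast
  note vs_unfolded = vs[unfolded n_free_path_def Let_def]
  have "distinct ?ws" "set ?ws \<subseteq> V"
    using vs_unfolded by (auto dest: in_set_takeD in_set_dropD)
  moreover have "{?ws ! i, ?ws ! Suc i} \<in> E" if "i < m - 1" for i
    using vs_unfolded that len by (simp add: ws_nth)
  moreover have "{?ws ! 0, ?ws ! 1} \<in> ME'" "{?ws ! (m - 1 - 1), ?ws ! (m - 1)} \<in> ME'"
    using ME' len by (simp_all add: ws_nth numeral_2_eq_2)
  moreover have "?ws ! j \<notin> MV' \<and>
      at_least (n + 1) ({e \<in> E. ?ws ! j \<in> e} - path_edges ?ws) \<and>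
      at_least n (({e \<in> E. ?ws ! j \<in> e} - path_edges ?ws) \<inter> ME')"
    if "0 < j" "j < m - 1" for j
  proof -
    have "0 < k + j" "k + j < length vs - 1" using that len by auto
    then have "at_least (n + 1) ({e \<in> E. vs ! (k + j) \<in> e} - path_edges vs)"
      "at_least n (({e \<in> E. vs ! (k + j) \<in> e} - path_edges vs) \<inter> ME)"
      using vs_unfolded by blast+
    moreover have "?ws ! j = vs ! (k + j)" using that by (intro ws_nth) simp
    ultimately show ?thesis
      using MV' that incident[of "vs ! (k + j)"] ME'(1)
      by (auto elim!: at_least_mono[rotated])
  qed
  ultimately show ?thesis
    unfolding n_free_path_def Let_def ws_len using len by auto
qed

lemma n_free_path_3_iff:
  "n_free_path V E MV ME n [u, v, w] \<longleftrightarrow>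
    distinct [u, v, w] \<and> {u, v, w} \<subseteq> V \<and> {u, v} \<in> E \<and> {v, w} \<in> E \<and>
    {u, v} \<in> ME \<and> {v, w} \<in> ME \<and> v \<notin> MV \<and>
    at_least (n + 1) ({e \<in> E. v \<in> e} - {{u, v}, {v, w}}) \<and>
    at_least n (({e \<in> E. v \<in> e} - {{u, v}, {v, w}}) \<inter> ME)"
proof -
  have two: "(\<forall>i<Suc (Suc 0). P i) \<longleftrightarrow> P 0 \<and> P 1" for P by (auto simp: less_Suc_eq)
  have one: "(\<forall>i. 0 < i \<and> i < Suc (Suc 0) \<longrightarrow> P i) \<longleftrightarrow> P 1" for P by (auto simp: less_Suc_eq)
  show ?thesis
    unfolding n_free_path_def Let_def path_edges_3 by (simp add: two one) blast
qed

lemma n_free_path_3_degree_saturated: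
  assumes path: "n_free_path V E MV ME n [u, v, w]"
    and saturated: "{e \<in> E. v \<in> e} \<subseteq> ME" and "finite ME"
  shows "n + 3 \<le> card {e \<in> ME. v \<in> e}"
proof -
  let ?I = "{e \<in> E. v \<in> e}" and ?P = "{{u, v}, {v, w}}"
  have fin: "finite ?I" using saturated \<open>finite ME\<close> by (rule finite_subset)
  have P: "?P \<subseteq> ?I" "card ?P = 2" using path
    by (auto simp: n_free_path_3_iff doubleton_eq_iff)
  have "n + 1 \<le> card (?I - ?P)" using path fin by (simp add: n_free_path_3_iff at_least_def)
  also have "\<dots> = card ?I - 2" using fin P by (simp add: card_Diff_subset finite_subset)
  finally have "n + 3 \<le> card ?I" by linarith
  also have "card ?I \<le> card {e \<in> ME. v \<in> e}"
    using saturated \<open>finite ME\<close> by (intro card_mono) auto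
  finally show ?thesis .
qed

lemma n_free_path_3_degree_extended:
  assumes path: "n_free_path V E MV ME n [u, v, w]"
    and "ME \<subseteq> ME'" "e\<^sub>0 \<in> ME' - ME" "v \<in> e\<^sub>0" "finite ME'"
  shows "n + 3 \<le> card {e \<in> ME'. v \<in> e}"
proof -
  let ?P = "{{u, v}, {v, w}}"
  define X where "X = ({e \<in> E. v \<in> e} - ?P) \<inter> ME"
  have fin: "finite X" "finite ?P"
    using assms(2,5) finite_subset unfolding X_def by auto
  have "?P \<subseteq> ME" "card ?P = 2" using path
    by (auto simp: n_free_path_3_iff doubleton_eq_iff)
  moreover have "n \<le> card X" using path fin unfolding X_def by (simp add: n_free_path_3_iff at_least_def)
  moreover have "card (X \<union> ?P) = card X + card ?P"
    using fin by (intro card_Un_disjoint) (auto simp: X_def)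
  moreover have "e\<^sub>0 \<notin> X \<union> ?P" using assms(3) \<open>?P \<subseteq> ME\<close> by (auto simp: X_def)
  ultimately have "n + 3 \<le> card (insert e\<^sub>0 (X \<union> ?P))" using fin by simp
  also have "\<dots> \<le> card {e \<in> ME'. v \<in> e}"
    using assms \<open>?P \<subseteq> ME\<close> by (intro card_mono) (auto simp: X_def)
  finally show ?thesis .
qed

lemma ex_n_free_path_3:
  assumes "graph V E" "ME \<subseteq> E" "finite ME" "v \<in> V" "v \<notin> MV"
    and degree: "n + 2 \<le> card {e \<in> ME. v \<in> e}"
    and "e\<^sub>0 \<in> E - ME" "v \<in> e\<^sub>0"
  shows "\<exists>u w. n_free_path V E MV ME n [u, v, w]"
proof -
  let ?M = "{e \<in> ME. v \<in> e}"
  have fin: "finite ?M" using \<open>finite ME\<close> by simp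
  have "\<not> card ?M \<le> Suc 0" using degree by linarith
  then obtain e\<^sub>1 e\<^sub>2 where e12: "e\<^sub>1 \<in> ?M" "e\<^sub>2 \<in> ?M" "e\<^sub>1 \<noteq> e\<^sub>2"
    using card_le_Suc0_iff_eq[OF fin] by blast
  have other_end: "\<exists>x \<in> V. x \<noteq> v \<and> e = {x, v}" if "e \<in> E" "v \<in> e" for e
    using assms(1) that unfolding graph_def by (auto simp: insert_commute)
  obtain u w where u: "u \<in> V" "u \<noteq> v" "e\<^sub>1 = {u, v}" and w: "w \<in> V" "w \<noteq> v" "e\<^sub>2 = {v, w}"
    using other_end[of e\<^sub>1] other_end[of e\<^sub>2] e12 assms(2) by (auto simp: insert_commute)
  have "n + 2 \<le> card (?M - {e\<^sub>1, e\<^sub>2}) + 2"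
    using degree fin e12 by (simp add: card_Diff_subset)
  then have "n \<le> card (?M - {e\<^sub>1, e\<^sub>2})" by linarith
  moreover have "card (insert e\<^sub>0 (?M - {e\<^sub>1, e\<^sub>2})) = Suc (card (?M - {e\<^sub>1, e\<^sub>2}))"
    using fin assms(7) by simp
  ultimately have "at_least (n + 1) (insert e\<^sub>0 (?M - {e\<^sub>1, e\<^sub>2}))"
    "at_least n (?M - {e\<^sub>1, e\<^sub>2})"
    unfolding at_least_def by simp_all
  moreover have "insert e\<^sub>0 (?M - {e\<^sub>1, e\<^sub>2}) \<subseteq> {e \<in> E. v \<in> e} - {e\<^sub>1, e\<^sub>2}"
    "?M - {e\<^sub>1, e\<^sub>2} \<subseteq> ({e \<in> E. v \<in> e} - {e\<^sub>1, e\<^sub>2}) \<inter> ME"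
    using assms(2,7,8) e12 by auto
  ultimately have "at_least (n + 1) ({e \<in> E. v \<in> e} - {e\<^sub>1, e\<^sub>2})"
    "at_least n (({e \<in> E. v \<in> e} - {e\<^sub>1, e\<^sub>2}) \<inter> ME)"
    by (blast intro: at_least_mono)+
  moreover have "distinct [u, v, w]" using u w e12 by auto
  ultimately have "n_free_path V E MV ME n [u, v, w]"
    unfolding n_free_path_3_iff using u w e12 assms(2,4,5) by auto
  then show ?thesis by blast
qed

lemma n_free_path_after_second_edge:
  assumes path: "n_free_path V E MV ME n ws" and long: "4 \<le> length ws"
  shows "\<exists>ws'. length ws' < length ws \<and>
    n_free_path V E (insert x MV) (insert {ws ! 1, ws ! 2} ME) n ws'"
proof -
  have ends: "{ws ! 0, ws ! 1} \<in> ME" "{ws ! (length ws - 2), ws ! (length ws - 1)} \<in> ME"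
    using path unfolding n_free_path_def Let_def by (simp_all add: numeral_2_eq_2)
  show ?thesis
  proof (cases "x = ws ! 1")
    case True
    have "ws ! j \<notin> insert x MV" if "1 < j" "j < length ws - 1" for j
      using that True n_free_path_interior[OF path] path
      by (auto simp: n_free_path_def Let_def nth_eq_iff_index_eq)
    then have "n_free_path V E (insert x MV) (insert {ws ! 1, ws ! 2} ME) n
        (take (length ws - 1) (drop 1 ws))"
      using long ends by (intro n_free_path_subpath[OF path]) (auto simp: numeral_2_eq_2)
    then show ?thesis using long by (intro exI[of _ "take (length ws - 1) (drop 1 ws)"]) auto
  next
    case False
    then have "n_free_path V E (insert x MV) (insert {ws ! 1, ws ! 2} ME) n (take 3 (drop 0 ws))"
      using n_free_path_interior[OF path] long ends
      by (intro n_free_path_subpath[OF path]) (auto simp: numeral_2_eq_2 less_Suc_eq)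
    then show ?thesis using long by (intro exI[of _ "take 3 (drop 0 ws)"]) auto
  qed
qed

lemma free_path_at_bob_turn_if_final_score:
  assumes "graph V E" and score: "enat (n + 3) \<le> final_score V E \<sigma> a"
  shows "\<exists>i. free_path_at_bob_turn V E \<sigma> a n i"
proof -
  obtain r v where r: "completed V E \<sigma> a r" "v \<in> V" "v \<notin> mV a r"
    "n + 3 \<le> card {e \<in> mE \<sigma> a r. v \<in> e}"
    using score by (subst (asm) final_score_ge_iff) auto
  let ?deg = "\<lambda>j. card {e \<in> mE \<sigma> a j. v \<in> e}"
  obtain i where i: "i < r" "\<not> n + 3 \<le> ?deg i" "n + 3 \<le> ?deg (Suc i)"
    using ex_crossing_step[of "\<lambda>j. n + 3 \<le> ?deg j"] r(4) by auto
  have c: "completed V E \<sigma> a i" "a i \<in> V - mV a i" "bmove \<sigma> a i \<in> E - mE \<sigma> a i"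
    using completed_le[OF r(1), of "Suc i"] i(1) by (auto simp: completed_Suc)
  have "v \<in> bmove \<sigma> a i"
  proof (rule ccontr)
    assume "v \<notin> bmove \<sigma> a i"
    then have "{e \<in> mE \<sigma> a (Suc i). v \<in> e} = {e \<in> mE \<sigma> a i. v \<in> e}" by (auto simp: mE_Suc)
    with i show False by simp
  qed
  then have "{e \<in> mE \<sigma> a (Suc i). v \<in> e} = insert (bmove \<sigma> a i) {e \<in> mE \<sigma> a i. v \<in> e}"
    by (auto simp: mE_Suc)
  then have "?deg (Suc i) = Suc (?deg i)" using c(3) by simp
  then have "n + 2 \<le> ?deg i" using i(3) by simp
  moreover have "v \<notin> insert (a i) (mV a i)"
    using r(3) mV_mono[of "Suc i" r a] i(1) by (auto simp: mV_Suc)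
  ultimately obtain u w where "n_free_path V E (insert (a i) (mV a i)) (mE \<sigma> a i) n [u, v, w]"
    using ex_n_free_path_3[OF assms(1) mE_subset_E[OF c(1)] finite_mE r(2)] c(3) \<open>v \<in> bmove \<sigma> a i\<close>
    by blast
  then show ?thesis using c unfolding free_path_at_bob_turn_def by blast
qed

section \<open>Playing along a shortest free path\<close>

(* Unlike free_path_at_bob_turn, this does not require Bob to have a move left: it is the
   invariant along which free_path_strategy shortens its path. *)
definition n_free_path_at_turn ::
  "'a set \<Rightarrow> 'a set set \<Rightarrow> 'a bob_strat \<Rightarrow> (nat \<Rightarrow> 'a) \<Rightarrow> nat \<Rightarrow> nat \<Rightarrow> 'a list \<Rightarrow> bool" where
  "n_free_path_at_turn V E \<sigma> a n i vs \<longleftrightarrow>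
     completed V E \<sigma> a i \<and> a i \<in> V - mV a i \<and>
     n_free_path V E (insert (a i) (mV a i)) (mE \<sigma> a i) n vs"

definition legalize :: "'a set set \<Rightarrow> 'a set set \<Rightarrow> 'a set \<Rightarrow> 'a set" where
  "legalize E ME e = (if e \<in> E - ME then e else (SOME e. e \<in> E - ME))"

definition shortest_n_free_path :: "'a set \<Rightarrow> 'a set set \<Rightarrow> 'a set \<Rightarrow> 'a set set \<Rightarrow> nat \<Rightarrow> 'a list" where
  "shortest_n_free_path V E MV ME n = arg_min length (n_free_path V E MV ME n)"

definition free_path_move :: "'a set \<Rightarrow> 'a set set \<Rightarrow> 'a set \<Rightarrow> 'a set set \<Rightarrow> nat \<Rightarrow> 'a set" where
  "free_path_move V E MV ME n = (let vs = shortest_n_free_path V E MV ME n in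
     if 4 \<le> length vs then {vs ! 1, vs ! 2}
     else legalize E ME (SOME e. e \<in> E - ME \<and> vs ! 1 \<in> e))"

definition free_path_strategy :: "'a set \<Rightarrow> 'a set set \<Rightarrow> nat \<Rightarrow> 'a bob_strat \<Rightarrow> 'a bob_strat" where
  "free_path_strategy V E n \<sigma> h x = (let MV = insert x (fst ` set h); ME = snd ` set h in
     if \<exists>vs. n_free_path V E MV ME n vs then free_path_move V E MV ME n
     else legalize E ME (\<sigma> h x))"

lemma legalize_legal: "E - ME \<noteq> {} \<Longrightarrow> legalize E ME e \<in> E - ME"
  using some_in_eq[of "E - ME"] unfolding legalize_def by auto

lemma legalize_id: "e \<in> E - ME \<Longrightarrow> legalize E ME e = e"
  unfolding legalize_def by simp

lemma n_free_path_shortest: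
  "n_free_path V E MV ME n vs \<Longrightarrow> n_free_path V E MV ME n (shortest_n_free_path V E MV ME n)"
  unfolding shortest_n_free_path_def by (rule arg_min_nat_lemma[THEN conjunct1])

lemma shortest_n_free_path_le:
  "n_free_path V E MV ME n vs \<Longrightarrow> length (shortest_n_free_path V E MV ME n) \<le> length vs"
  unfolding shortest_n_free_path_def by (rule arg_min_nat_le)

lemma shortest_n_free_path_second_edge:
  assumes "n_free_path V E MV ME n vs"
    and ws: "ws = shortest_n_free_path V E MV ME n" "4 \<le> length ws"
  shows "{ws ! 1, ws ! 2} \<in> E - ME"
proof
  have path: "n_free_path V E MV ME n ws" using assms n_free_path_shortest by blast
  then show "{ws ! 1, ws ! 2} \<in> E"
    using ws(2) unfolding n_free_path_def Let_def by (simp add: numeral_2_eq_2)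
  show "{ws ! 1, ws ! 2} \<notin> ME"
  proof
    assume "{ws ! 1, ws ! 2} \<in> ME"
    then have "n_free_path V E MV ME n (take 3 (drop 0 ws))"
      using path ws(2) by (intro n_free_path_subpath) (auto simp: n_free_path_def Let_def)
    then have "length ws \<le> 3" using ws(1) shortest_n_free_path_le by fastforce
    with ws(2) show False by simp
  qed
qed

lemma free_path_move_long:
  assumes "n_free_path V E MV ME n vs"
    and "ws = shortest_n_free_path V E MV ME n" "4 \<le> length ws"
  shows "free_path_move V E MV ME n = {ws ! 1, ws ! 2}" "{ws ! 1, ws ! 2} \<in> E - ME"
  using assms shortest_n_free_path_second_edge[OF assms] by (simp_all add: free_path_move_def Let_def)

lemma free_path_move_short:
  assumes "ws = shortest_n_free_path V E MV ME n" "\<not> 4 \<le> length ws"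
    and "e \<in> E - ME" "ws ! 1 \<in> e"
  shows "free_path_move V E MV ME n \<in> E - ME" "ws ! 1 \<in> free_path_move V E MV ME n"
proof -
  have "(SOME e. e \<in> E - ME \<and> ws ! 1 \<in> e) \<in> E - ME \<and> ws ! 1 \<in> (SOME e. e \<in> E - ME \<and> ws ! 1 \<in> e)"
    using assms(3,4) by (rule someI[where P = "\<lambda>e. e \<in> E - ME \<and> ws ! 1 \<in> e", OF conjI])
  then show "free_path_move V E MV ME n \<in> E - ME" "ws ! 1 \<in> free_path_move V E MV ME n"
    using assms(1,2) by (simp_all add: free_path_move_def legalize_id)
qed

lemma free_path_move_legal:
  assumes "n_free_path V E MV ME n vs" "E - ME \<noteq> {}"
  shows "free_path_move V E MV ME n \<in> E - ME"
  using assms free_path_move_long[OF assms(1) refl] legalize_legal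
  by (auto simp: free_path_move_def Let_def)

lemma bmove_free_path_strategy:
  "bmove (free_path_strategy V E n \<sigma>) a i =
    (let MV = insert (a i) (mV a i); ME = mE (free_path_strategy V E n \<sigma>) a i in
     if \<exists>vs. n_free_path V E MV ME n vs then free_path_move V E MV ME n
     else legalize E ME (\<sigma> (hist (free_path_strategy V E n \<sigma>) a i) (a i)))"
  unfolding bmove_def by (subst free_path_strategy_def) (simp only: fst_set_hist snd_set_hist)

lemma bob_strategy_free_path_strategy: "bob_strategy V E (free_path_strategy V E n \<sigma>)"
  unfolding bob_strategy_def
proof (intro allI impI)
  fix a i
  let ?ME = "mE (free_path_strategy V E n \<sigma>) a i"
  assume "completed V E (free_path_strategy V E n \<sigma>) a i \<and> a i \<in> V - mV a i \<and> E - ?ME \<noteq> {}"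
  then have "E - ?ME \<noteq> {}" by blast
  then show "bmove (free_path_strategy V E n \<sigma>) a i \<in> E - ?ME"
    unfolding bmove_free_path_strategy Let_def
    by (split if_split) (metis free_path_move_legal legalize_legal)
qed

lemma bmove_free_path_strategy_at_turn:
  assumes "n_free_path_at_turn V E (free_path_strategy V E n \<sigma>) a n i vs"
  shows "bmove (free_path_strategy V E n \<sigma>) a i =
    free_path_move V E (insert (a i) (mV a i)) (mE (free_path_strategy V E n \<sigma>) a i) n"
  using assms unfolding n_free_path_at_turn_def bmove_free_path_strategy Let_def by auto

lemma free_path_strategy_long_step:
  fixes V :: "'a set" and E n \<sigma> defines "S \<equiv> free_path_strategy V E n \<sigma>"
  assumes alice: "alice_legal V E S a" and turn: "n_free_path_at_turn V E S a n i vs"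
    and ws: "ws = shortest_n_free_path V E (insert (a i) (mV a i)) (mE S a i) n" "4 \<le> length ws"
  shows "\<exists>vs'. length vs' < length vs \<and> n_free_path_at_turn V E S a n (Suc i) vs'"
proof -
  define MV where "MV = insert (a i) (mV a i)"
  define ME where "ME = mE S a i"
  have path: "n_free_path V E MV ME n vs" and c: "completed V E S a i" "a i \<in> V - mV a i"
    using turn unfolding n_free_path_at_turn_def MV_def ME_def by blast+
  have ws_path: "n_free_path V E MV ME n ws" "length ws \<le> length vs"
    using path ws(1) n_free_path_shortest shortest_n_free_path_le
    unfolding MV_def ME_def by blast+
  have move: "bmove S a i = {ws ! 1, ws ! 2}" "{ws ! 1, ws ! 2} \<in> E - ME"
    using bmove_free_path_strategy_at_turn[OF turn[unfolded S_def]]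
      free_path_move_long[OF path ws(1)[folded MV_def ME_def] ws(2)]
    unfolding S_def MV_def ME_def by simp_all
  have turn': "completed V E S a (Suc i)" "mV a (Suc i) = MV"
    "mE S a (Suc i) = insert {ws ! 1, ws ! 2} ME"
    using c move by (simp_all add: completed_Suc mV_Suc mE_Suc MV_def ME_def)
  have "ws ! 1 \<in> V" "ws ! 1 \<notin> MV" using n_free_path_interior[OF ws_path(1)] ws(2) by auto
  then have "a (Suc i) \<in> V - MV" using alice turn' unfolding alice_legal_def by blast
  moreover obtain vs' where "length vs' < length ws"
    "n_free_path V E (insert (a (Suc i)) MV) (insert {ws ! 1, ws ! 2} ME) n vs'"
    using n_free_path_after_second_edge[OF ws_path(1) ws(2)] by blast
  ultimately show ?thesis
    using turn' ws_path(2) unfolding n_free_path_at_turn_def by (intro exI[of _ vs']) auto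
qed

lemma free_path_strategy_short_step:
  fixes V :: "'a set" and E n \<sigma> defines "S \<equiv> free_path_strategy V E n \<sigma>"
  assumes turn: "n_free_path_at_turn V E S a n i vs"
    and ws: "ws = shortest_n_free_path V E (insert (a i) (mV a i)) (mE S a i) n" "\<not> 4 \<le> length ws"
  shows "enat (n + 3) \<le> final_score V E S a"
proof -
  define MV where "MV = insert (a i) (mV a i)"
  define ME where "ME = mE S a i"
  have path: "n_free_path V E MV ME n vs" and c: "completed V E S a i" "a i \<in> V - mV a i"
    using turn unfolding n_free_path_at_turn_def MV_def ME_def by blast+
  have ws_path: "n_free_path V E MV ME n ws"
    using path ws(1) n_free_path_shortest unfolding MV_def ME_def by blast
  then have "length ws = 3" using ws(2) unfolding n_free_path_def Let_def by simp
  then obtain u v w where uvw: "ws = [u, v, w]" by (auto simp: numeral_3_eq_3 length_Suc_conv)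
  have v: "v \<in> V" "v \<notin> MV" using ws_path unfolding uvw n_free_path_3_iff by auto
  show ?thesis
  proof (cases "\<exists>e \<in> E - ME. v \<in> e")
    case True
    then have move: "bmove S a i \<in> E - ME" "v \<in> bmove S a i"
      using free_path_move_short[OF ws(1)[folded MV_def ME_def] ws(2)] uvw
        bmove_free_path_strategy_at_turn[OF turn[unfolded S_def]]
      unfolding S_def MV_def ME_def by auto
    have "completed V E S a (Suc i)" using c move by (simp add: completed_Suc ME_def)
    moreover have "n + 3 \<le> card {e \<in> mE S a (Suc i). v \<in> e}"
    proof (rule n_free_path_3_degree_extended[OF ws_path[unfolded uvw]])
      show "ME \<subseteq> mE S a (Suc i)" "bmove S a i \<in> mE S a (Suc i) - ME" "v \<in> bmove S a i"
        "finite (mE S a (Suc i))"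
        using move by (auto simp: mE_Suc ME_def)
    qed
    moreover have "v \<notin> mV a (Suc i)" using v by (simp add: mV_Suc MV_def)
    ultimately show ?thesis using v(1) by (subst final_score_ge_iff) auto
  next
    case False
    then have "n + 3 \<le> card {e \<in> mE S a i. v \<in> e}"
      using ws_path[unfolded uvw] unfolding ME_def by (intro n_free_path_3_degree_saturated) auto
    moreover have "v \<notin> mV a i" using v by (simp add: MV_def)
    ultimately show ?thesis using c(1) v(1) by (subst final_score_ge_iff) auto
  qed
qed

lemma free_path_strategy_wins:
  fixes V :: "'a set" and E n \<sigma> defines "S \<equiv> free_path_strategy V E n \<sigma>"
  assumes alice: "alice_legal V E S a" and turn: "n_free_path_at_turn V E S a n i vs"
  shows "enat (n + 3) \<le> final_score V E S a"
  using turn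
proof (induction "length vs" arbitrary: i vs rule: less_induct)
  case less
  let ?ws = "shortest_n_free_path V E (insert (a i) (mV a i)) (mE S a i) n"
  show ?case
  proof (cases "4 \<le> length ?ws")
    case True
    then show ?thesis
      using free_path_strategy_long_step[OF alice[unfolded S_def] less.prems[unfolded S_def] _ True]
        less.hyps unfolding S_def by blast
  next
    case False
    then show ?thesis
      using free_path_strategy_short_step[OF less.prems[unfolded S_def] _ False] unfolding S_def by blast
  qed
qed

lemma hist_free_path_strategy_eq:
  fixes V :: "'a set" and E n \<sigma> defines "S \<equiv> free_path_strategy V E n \<sigma>"
  assumes no_turn: "\<forall>i vs. \<not> n_free_path_at_turn V E S a n i vs"
  shows "completed V E \<sigma> a i \<Longrightarrow> hist \<sigma> a i = hist S a i"
proof (induction i)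
  case 0
  show ?case by simp
next
  case (Suc i)
  then have c: "completed V E \<sigma> a i" "a i \<in> V - mV a i" "bmove \<sigma> a i \<in> E - mE \<sigma> a i"
    by (auto simp: completed_Suc)
  have h: "hist \<sigma> a i = hist S a i" using Suc.IH c(1) .
  then have "completed V E S a i" "mE \<sigma> a i = mE S a i"
    using c(1) completed_eq_if_hist_eq mE_eq_if_hist_eq by blast+
  then have no_path: "\<not> (\<exists>vs. n_free_path V E (insert (a i) (mV a i)) (mE S a i) n vs)"
    using no_turn c(2) unfolding n_free_path_at_turn_def by blast
  have "bmove S a i = legalize E (mE S a i) (\<sigma> (hist S a i) (a i))"
    unfolding S_def bmove_free_path_strategy Let_def using no_path[unfolded S_def] by (rule if_not_P)
  also have "\<dots> = legalize E (mE \<sigma> a i) (bmove \<sigma> a i)"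
    using h \<open>mE \<sigma> a i = mE S a i\<close> by (simp add: bmove_def)
  also have "\<dots> = bmove \<sigma> a i" using c(3) by (rule legalize_id)
  finally show ?case using h by (simp add: bmove_def)
qed

lemma bob_wins_if_forces_n_free_path:
  assumes "\<forall>a. alice_legal V E \<sigma> a \<longrightarrow> (\<exists>i. free_path_at_bob_turn V E \<sigma> a n i)"
  shows "bob_wins V E (n + 3)"
proof -
  let ?S = "free_path_strategy V E n \<sigma>"
  have "enat (n + 3) \<le> final_score V E ?S a" if alice: "alice_legal V E ?S a" for a
  proof (cases "\<exists>i vs. n_free_path_at_turn V E ?S a n i vs")
    case True
    then show ?thesis using alice free_path_strategy_wins by blast
  next
    case False
    then have hist: "hist \<sigma> a i = hist ?S a i" if "completed V E \<sigma> a i" for i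
      using hist_free_path_strategy_eq that by blast
    then have "alice_legal V E \<sigma> a"
      using alice completed_eq_if_hist_eq unfolding alice_legal_def by blast
    then obtain i vs where "completed V E \<sigma> a i" "a i \<in> V - mV a i"
      "n_free_path V E (insert (a i) (mV a i)) (mE \<sigma> a i) n vs"
      using assms unfolding free_path_at_bob_turn_def by blast
    then have "n_free_path_at_turn V E ?S a n i vs"
      using hist completed_eq_if_hist_eq mE_eq_if_hist_eq
      unfolding n_free_path_at_turn_def by metis
    with False show ?thesis by blast
  qed
  then show ?thesis unfolding bob_wins_def using bob_strategy_free_path_strategy by blast
qed

theorem corollary5p3:
  fixes V :: "'a set" and E :: "'a set set" and n :: nat
  assumes "graph V E"
  shows "enat (n + 4) \<le> col_ve V E \<longleftrightarrow>
    (\<exists>\<sigma>. bob_strategy V E \<sigma> \<and>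
       (\<forall>a. alice_legal V E \<sigma> a \<longrightarrow> (\<exists>i. free_path_at_bob_turn V E \<sigma> a n i)))"
proof -
  have "enat (n + 4) \<le> col_ve V E \<longleftrightarrow> bob_wins V E (n + 3)"
    using col_ve_ge_iff_bob_wins[of "n + 3" V E] by (simp add: ac_simps)
  also have "\<dots> \<longleftrightarrow> (\<exists>\<sigma>. bob_strategy V E \<sigma> \<and>
       (\<forall>a. alice_legal V E \<sigma> a \<longrightarrow> (\<exists>i. free_path_at_bob_turn V E \<sigma> a n i)))"
  proof
    assume "bob_wins V E (n + 3)"
    then show "\<exists>\<sigma>. bob_strategy V E \<sigma> \<and>
       (\<forall>a. alice_legal V E \<sigma> a \<longrightarrow> (\<exists>i. free_path_at_bob_turn V E \<sigma> a n i))"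
      unfolding bob_wins_def using free_path_at_bob_turn_if_final_score[OF assms] by blast
  qed (use bob_wins_if_forces_n_free_path in blast)
  finally show ?thesis .
qed

end
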